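(* Let $U\subseteq\mathbb{R}^4$ be open with coordinates $(x^1,x^2,x^3,x^4)$ and let $a,b,p,q,s$ be real constants with $a^2+b^2\neq0$. Consider the Lorentzian metric $$g=2\,dx^1dx^4+(dx^2)^2+(dx^3)^2+\Big(x^4\big(a(x^2)^2+b(x^3)^2\big)+p(x^2)^2+2qx^2x^3+s(x^3)^2\Big)(dx^4)^2$$ on $U$. Then $(U,g)$ belongs to class $\mathcal{A}$ (its Ricci tensor is a Killing tensor) if and only if $b=-a$.
   Context: A pseudo-Riemannian manifold belongs to Gray's class $\mathcal{A}$ if its Ricci tensor $\varrho$ is cyclic-parallel, $(\nabla_X\varrho)(Y,Z)+(\nabla_Y\varrho)(Z,X)+(\nabla_Z\varrho)(X,Y)=0$ for all vector fields $X,Y,Z$, equivalently $(\nabla_X\varrho)(X,X)=0$ for all $X$; $\nabla$ is the Levi-Civita connection. *)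

theory Defs
  imports "HOL-Analysis.Analysis" "HOL-Library.Numeral_Type"
begin

text \<open>Pseudo-Riemannian metrics on an open subset of R^4, given in the global
coordinates (x^1,...,x^4) = (x$1,...,x$4) by their component functions
g_ij(x). Indices range over the 4-element type 4 (elements 1,2,3,4).\<close>

type_synonym metric4 = "real^4 \<Rightarrow> 4 \<Rightarrow> 4 \<Rightarrow> real"

definition pd :: "4 \<Rightarrow> (real^4 \<Rightarrow> real) \<Rightarrow> real^4 \<Rightarrow> real" where
  "pd i f x = deriv (\<lambda>t. f (x + t *\<^sub>R axis i 1)) 0"

definition ginv :: "metric4 \<Rightarrow> real^4 \<Rightarrow> 4 \<Rightarrow> 4 \<Rightarrow> real" where
  "ginv g x i j = matrix_inv (\<chi> k l. g x k l) $ i $ j"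

definition christoffel :: "metric4 \<Rightarrow> real^4 \<Rightarrow> 4 \<Rightarrow> 4 \<Rightarrow> 4 \<Rightarrow> real" where
  "christoffel g x k i j = (1/2) * (\<Sum>l\<in>UNIV. ginv g x k l *
      (pd i (\<lambda>y. g y j l) x + pd j (\<lambda>y. g y i l) x - pd l (\<lambda>y. g y i j) x))"

definition ricci :: "metric4 \<Rightarrow> real^4 \<Rightarrow> 4 \<Rightarrow> 4 \<Rightarrow> real" where
  "ricci g x j k = (\<Sum>i\<in>UNIV.
      pd i (\<lambda>y. christoffel g y i j k) x - pd j (\<lambda>y. christoffel g y i i k) x
      + (\<Sum>p\<in>UNIV. christoffel g x i i p * christoffel g x p j k
                   - christoffel g x i j p * christoffel g x p i k))"

definition nabla_ricci :: "metric4 \<Rightarrow> real^4 \<Rightarrow> 4 \<Rightarrow> 4 \<Rightarrow> 4 \<Rightarrow> real" where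
  "nabla_ricci g x i j k = pd i (\<lambda>y. ricci g y j k) x
      - (\<Sum>p\<in>UNIV. christoffel g x p i j * ricci g x p k)
      - (\<Sum>p\<in>UNIV. christoffel g x p i k * ricci g x j p)"

text \<open>Gray's class A: the Ricci tensor is cyclic-parallel at every point of U
(tensorial identity, checked on the coordinate frame).\<close>
definition class_A :: "metric4 \<Rightarrow> (real^4) set \<Rightarrow> bool" where
  "class_A g U \<longleftrightarrow> (\<forall>x\<in>U. \<forall>i j k.
      nabla_ricci g x i j k + nabla_ricci g x j k i + nabla_ricci g x k i j = 0)"

definition walker_H :: "real \<Rightarrow> real \<Rightarrow> real \<Rightarrow> real \<Rightarrow> real \<Rightarrow> real^4 \<Rightarrow> real" where
  "walker_H a b p q s x = x$4 * (a * (x$2)^2 + b * (x$3)^2)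
      + p * (x$2)^2 + 2 * q * x$2 * x$3 + s * (x$3)^2"

definition walker_metric :: "real \<Rightarrow> real \<Rightarrow> real \<Rightarrow> real \<Rightarrow> real \<Rightarrow> metric4" where
  "walker_metric a b p q s x i j =
     (if (i = 1 \<and> j = 4) \<or> (i = 4 \<and> j = 1) then 1
      else if i = j \<and> (i = 2 \<or> i = 3) then 1
      else if i = 4 \<and> j = 4 then walker_H a b p q s x
      else 0)"

end

theory Submission imports Defs begin

text \<open>The metric is in Brinkmann form \<open>2 dx\<^sup>1dx\<^sup>4 + (dx\<^sup>2)\<^sup>2 + (dx\<^sup>3)\<^sup>2 + H (dx\<^sup>4)\<^sup>2\<close> with \<open>H\<close>
independent of \<open>x\<^sup>1\<close>. Its Christoffel symbols are halved first derivatives of \<open>H\<close>, none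
has upper index 4, so the quadratic terms of the curvature vanish and the Ricci tensor
reduces to \<open>\<rho> = \<rho>\<^sub>4\<^sub>4 dx\<^sup>4 \<otimes> dx\<^sup>4\<close> with \<open>\<rho>\<^sub>4\<^sub>4 = -(\<partial>\<^sub>2\<^sup>2 H + \<partial>\<^sub>3\<^sup>2 H)/2\<close>. For the same reason
\<open>\<nabla>\<rho> = d\<rho>\<^sub>4\<^sub>4 \<otimes> dx\<^sup>4 \<otimes> dx\<^sup>4\<close>, whose cyclic sum vanishes iff \<open>d\<rho>\<^sub>4\<^sub>4 = 0\<close>. For the given
\<open>H\<close> one gets \<open>\<rho>\<^sub>4\<^sub>4 = -((a + b) x\<^sup>4 + p + s)\<close>.\<close>

definition coord_differentiable :: "(real^4 \<Rightarrow> real) \<Rightarrow> bool" where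
  "coord_differentiable f \<longleftrightarrow> (\<forall>x i. (\<lambda>t. f (x + t *\<^sub>R axis i 1)) differentiable (at 0))"

text \<open>Invariance along lines, rather than \<open>pd k f = 0\<close>, is inherited by all partial
derivatives without any symmetry of second derivatives.\<close>

definition axis_invariant :: "4 \<Rightarrow> (real^4 \<Rightarrow> real) \<Rightarrow> bool" where
  "axis_invariant k f \<longleftrightarrow> (\<forall>x t. f (x + t *\<^sub>R axis k 1) = f x)"

lemma pd_eqI:
  "((\<lambda>t. f (x + t *\<^sub>R axis i 1)) has_real_derivative D) (at 0) \<Longrightarrow> pd i f x = D"
  by (simp add: pd_def DERIV_imp_deriv)

lemma coord_differentiableD:
  "coord_differentiable f \<Longrightarrow> ((\<lambda>t. f (x + t *\<^sub>R axis i 1)) has_real_derivative pd i f x) (at 0)"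
  unfolding coord_differentiable_def pd_def using DERIV_deriv_iff_real_differentiable by blast

lemma coord_differentiableI:
  "(\<And>x i. ((\<lambda>t. f (x + t *\<^sub>R axis i 1)) has_real_derivative D x i) (at 0))
    \<Longrightarrow> coord_differentiable f"
  unfolding coord_differentiable_def using real_differentiable_def by blast

lemma axis_line_nth: "(x + t *\<^sub>R axis i 1) $ j = x $ j + (if j = i then t else 0)"
  by (simp add: axis_def)

lemma coord_differentiable_const [simp]: "coord_differentiable (\<lambda>y. c)"
  by (rule coord_differentiableI[where D = "\<lambda>_ _. 0"]) simp

lemma pd_const [simp]: "pd i (\<lambda>y. c) x = 0"
  by (rule pd_eqI) simp

lemma coord_differentiable_nth [simp]: "coord_differentiable (\<lambda>y. y $ j)"
  by (rule coord_differentiableI[where D = "\<lambda>_ i. if j = i then 1 else 0"])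
    (subst axis_line_nth, auto intro!: derivative_eq_intros)

lemma pd_nth [simp]: "pd i (\<lambda>y. y $ j) x = (if j = i then 1 else 0)"
  by (rule pd_eqI, subst axis_line_nth) (auto intro!: derivative_eq_intros)

lemma coord_differentiable_add [simp]:
  "coord_differentiable f \<Longrightarrow> coord_differentiable g \<Longrightarrow> coord_differentiable (\<lambda>y. f y + g y)"
  by (rule coord_differentiableI) (rule DERIV_add; erule coord_differentiableD)

lemma pd_add [simp]:
  "coord_differentiable f \<Longrightarrow> coord_differentiable g \<Longrightarrow> pd i (\<lambda>y. f y + g y) x = pd i f x + pd i g x"
  by (rule pd_eqI) (rule DERIV_add; erule coord_differentiableD)

lemma coord_differentiable_mult [simp]:
  "coord_differentiable f \<Longrightarrow> coord_differentiable g \<Longrightarrow> coord_differentiable (\<lambda>y. f y * g y)"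
  by (rule coord_differentiableI) (rule DERIV_mult; erule coord_differentiableD)

lemma pd_mult [simp]:
  "coord_differentiable f \<Longrightarrow> coord_differentiable g
    \<Longrightarrow> pd i (\<lambda>y. f y * g y) x = pd i f x * g x + f x * pd i g x"
  by (rule pd_eqI) (rule derivative_eq_intros, (erule coord_differentiableD)+, simp)

lemma coord_differentiable_minus [simp]:
  "coord_differentiable f \<Longrightarrow> coord_differentiable (\<lambda>y. - f y)"
  by (rule coord_differentiableI) (rule DERIV_minus; erule coord_differentiableD)

lemma pd_minus [simp]: "coord_differentiable f \<Longrightarrow> pd i (\<lambda>y. - f y) x = - pd i f x"
  by (rule pd_eqI) (rule DERIV_minus; erule coord_differentiableD)

lemma coord_differentiable_power [simp]:
  "coord_differentiable f \<Longrightarrow> coord_differentiable (\<lambda>y. f y ^ n)"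
  by (rule coord_differentiableI) (rule derivative_eq_intros, erule coord_differentiableD, simp)

lemma pd_power [simp]:
  "coord_differentiable f \<Longrightarrow> pd i (\<lambda>y. f y ^ n) x = real n * f x ^ (n - 1) * pd i f x"
  by (rule pd_eqI) (rule derivative_eq_intros, erule coord_differentiableD, simp)

lemma coord_differentiable_divide [simp]:
  "coord_differentiable f \<Longrightarrow> coord_differentiable (\<lambda>y. f y / c)"
  by (rule coord_differentiableI) (rule DERIV_cdivide; erule coord_differentiableD)

lemma pd_divide [simp]: "coord_differentiable f \<Longrightarrow> pd i (\<lambda>y. f y / c) x = pd i f x / c"
  by (rule pd_eqI) (rule DERIV_cdivide; erule coord_differentiableD)

lemma pd_axis_invariant: "axis_invariant k f \<Longrightarrow> pd k f x = 0"
  unfolding axis_invariant_def by (rule pd_eqI) simp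

lemma axis_invariant_pd: "axis_invariant k f \<Longrightarrow> axis_invariant k (pd i f)"
proof (unfold axis_invariant_def, intro allI)
  fix x t
  assume inv: "\<forall>x t. f (x + t *\<^sub>R axis k 1) = f x"
  have "f (x + t *\<^sub>R axis k 1 + s *\<^sub>R axis i 1) = f (x + s *\<^sub>R axis i 1)" for s
    using inv[rule_format, of "x + s *\<^sub>R axis i 1" t] by (simp add: algebra_simps)
  then show "pd i f (x + t *\<^sub>R axis k 1) = pd i f x"
    by (simp add: pd_def)
qed

lemma matrix_inv_unique:
  fixes A :: "'a::semiring_1^'n^'m" and B :: "'a^'m^'n"
  assumes "A ** B = mat 1" and "B ** A = mat 1"
  shows "matrix_inv A = B"
proof -
  let ?C = "matrix_inv A"
  have C: "A ** ?C = mat 1 \<and> ?C ** A = mat 1"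
    unfolding matrix_inv_def by (rule someI[of _ B]) (use assms in auto)
  have "?C = ?C ** (A ** B)" using assms by (simp add: matrix_mul_rid)
  also have "\<dots> = (?C ** A) ** B" by (simp add: matrix_mul_assoc)
  also have "\<dots> = B" using C by (simp add: matrix_mul_lid)
  finally show ?thesis .
qed

definition brinkmann_metric :: "(real^4 \<Rightarrow> real) \<Rightarrow> metric4" where
  "brinkmann_metric H x i j =
     (if (i = 1 \<and> j = 4) \<or> (i = 4 \<and> j = 1) then 1
      else if i = j \<and> (i = 2 \<or> i = 3) then 1
      else if i = 4 \<and> j = 4 then H x
      else 0)"

definition transverse_laplacian :: "(real^4 \<Rightarrow> real) \<Rightarrow> real^4 \<Rightarrow> real" where
  "transverse_laplacian H x = pd 2 (pd 2 H) x + pd 3 (pd 3 H) x"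

lemma ginv_brinkmann:
  "ginv (brinkmann_metric H) x k l =
     (if k = 1 \<and> l = 1 then - H x
      else if (k = 1 \<and> l = 4) \<or> (k = 4 \<and> l = 1) then 1
      else if k = l \<and> (k = 2 \<or> k = 3) then 1 else 0)"
    (is "_ = ?G k l")
proof -
  let ?g = "\<chi> k l. brinkmann_metric H x k l"
  have "?g ** (\<chi> k l. ?G k l) = mat 1" "(\<chi> k l. ?G k l) ** ?g = mat 1"
    unfolding vec_eq_iff forall_4
    by (simp_all add: matrix_matrix_mult_def sum_4 brinkmann_metric_def mat_def)
  then have "matrix_inv ?g = (\<chi> k l. ?G k l)"
    by (rule matrix_inv_unique)
  then show ?thesis unfolding ginv_def by simp
qed

lemma pd_brinkmann_metric:
  "pd i (\<lambda>y. brinkmann_metric H y j l) x = (if j = 4 \<and> l = 4 then pd i H x else 0)"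
  using exhaust_4[of j] exhaust_4[of l]
  by (elim disjE) (simp_all add: brinkmann_metric_def)

lemma christoffel_brinkmann:
  assumes "axis_invariant 1 H"
  shows "christoffel (brinkmann_metric H) x k i j =
     (if k = 1 then (if i = 4 then pd j H x / 2 else if j = 4 then pd i H x / 2 else 0)
      else if (k = 2 \<or> k = 3) \<and> i = 4 \<and> j = 4 then - pd k H x / 2 else 0)"
  unfolding christoffel_def ginv_brinkmann pd_brinkmann_metric
  using exhaust_4[of k] exhaust_4[of i] exhaust_4[of j] pd_axis_invariant[OF assms]
  by (elim disjE) (simp_all add: sum_4)

lemma ricci_brinkmann:
  assumes inv: "axis_invariant 1 H" and diff: "\<And>m. coord_differentiable (pd m H)"
  shows "ricci (brinkmann_metric H) x j k =
     (if j = 4 \<and> k = 4 then - transverse_laplacian H x / 2 else 0)"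
proof -
  have "pd 1 (pd m H) x = 0" for m
    by (rule pd_axis_invariant, rule axis_invariant_pd, rule inv)
  then show ?thesis
    unfolding ricci_def christoffel_brinkmann[OF inv] transverse_laplacian_def
    using exhaust_4[of j] exhaust_4[of k] pd_axis_invariant[OF inv] diff
    by (elim disjE) (simp_all add: sum_4)
qed

lemma nabla_ricci_brinkmann:
  assumes "axis_invariant 1 H" and "\<And>m. coord_differentiable (pd m H)"
  shows "nabla_ricci (brinkmann_metric H) x i j k =
     (if j = 4 \<and> k = 4 then pd i (\<lambda>y. ricci (brinkmann_metric H) y 4 4) x else 0)"
  unfolding nabla_ricci_def ricci_brinkmann[OF assms] christoffel_brinkmann[OF assms(1)]
  using exhaust_4[of j] exhaust_4[of k]
  by (elim disjE) (simp_all add: sum_4)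

theorem class_A_brinkmann_iff:
  assumes "axis_invariant 1 H" and "\<And>m. coord_differentiable (pd m H)"
  shows "class_A (brinkmann_metric H) U \<longleftrightarrow>
     (\<forall>x\<in>U. \<forall>i. pd i (\<lambda>y. ricci (brinkmann_metric H) y 4 4) x = 0)"
    (is "_ \<longleftrightarrow> (\<forall>x\<in>U. \<forall>i. ?d x i = 0)")
proof
  assume A: "class_A (brinkmann_metric H) U"
  show "\<forall>x\<in>U. \<forall>i. ?d x i = 0"
  proof (intro ballI allI)
    fix x i
    assume "x \<in> U"
    with A have "nabla_ricci (brinkmann_metric H) x i 4 4 + nabla_ricci (brinkmann_metric H) x 4 4 i
        + nabla_ricci (brinkmann_metric H) x 4 i 4 = 0"
      unfolding class_A_def by blast
    then show "?d x i = 0"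
      unfolding nabla_ricci_brinkmann[OF assms] by (cases "i = 4") simp_all
  qed
next
  assume "\<forall>x\<in>U. \<forall>i. ?d x i = 0"
  then show "class_A (brinkmann_metric H) U"
    unfolding class_A_def nabla_ricci_brinkmann[OF assms] by simp
qed

lemma walker_metric_eq_brinkmann:
  "walker_metric a b p q s = brinkmann_metric (walker_H a b p q s)"
  by (simp add: fun_eq_iff walker_metric_def brinkmann_metric_def)

lemma axis_invariant_walker_H: "axis_invariant 1 (walker_H a b p q s)"
  by (simp add: axis_invariant_def walker_H_def axis_def)

lemma pd_walker_H:
  "pd i (walker_H a b p q s) = (\<lambda>x.
     if i = 2 then 2 * a * x$4 * x$2 + 2 * p * x$2 + 2 * q * x$3
     else if i = 3 then 2 * b * x$4 * x$3 + 2 * q * x$2 + 2 * s * x$3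
     else if i = 4 then a * (x$2)^2 + b * (x$3)^2 else 0)"
proof -
  have H: "walker_H a b p q s = (\<lambda>y. y$4 * (a * (y$2)^2 + b * (y$3)^2)
      + p * (y$2)^2 + 2 * q * y$2 * y$3 + s * (y$3)^2)"
    by (simp add: walker_H_def fun_eq_iff)
  show ?thesis
    unfolding H using exhaust_4[of i] by (elim disjE) (simp_all add: fun_eq_iff algebra_simps)
qed

lemma coord_differentiable_pd_walker_H: "coord_differentiable (pd m (walker_H a b p q s))"
  unfolding pd_walker_H by (cases "m = 2"; cases "m = 3"; cases "m = 4") simp_all

lemma ricci_walker_metric:
  "ricci (walker_metric a b p q s) x 4 4 = - ((a + b) * x$4 + p + s)"
  unfolding walker_metric_eq_brinkmann
    ricci_brinkmann[OF axis_invariant_walker_H coord_differentiable_pd_walker_H]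
  by (simp add: transverse_laplacian_def pd_walker_H field_simps)

lemma pd_ricci_walker_metric:
  "pd i (\<lambda>y. ricci (walker_metric a b p q s) y 4 4) x = (if i = 4 then - (a + b) else 0)"
  unfolding ricci_walker_metric by (subst pd_minus) simp_all

theorem mainTheorem3:
  fixes U :: "(real^4) set" and a b p q s :: real
  assumes "open U" and "U \<noteq> {}" and "a^2 + b^2 \<noteq> 0"
  shows "class_A (walker_metric a b p q s) U \<longleftrightarrow> b = -a"
proof -
  have "class_A (walker_metric a b p q s) U \<longleftrightarrow>
      (\<forall>x\<in>U. \<forall>i. pd i (\<lambda>y. ricci (walker_metric a b p q s) y 4 4) x = 0)"
    unfolding walker_metric_eq_brinkmann
    by (rule class_A_brinkmann_iff[OF axis_invariant_walker_H coord_differentiable_pd_walker_H])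
  also have "\<dots> \<longleftrightarrow> a + b = 0"
    using \<open>U \<noteq> {}\<close> by (auto simp: pd_ricci_walker_metric)
  finally show ?thesis by auto
qed

end
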